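(* Let $A \in L(H)$ and $\rho > 0$ with $\sigma(A) \cap S_\rho = \emptyset$, and set $M_\rho \coloneqq \sup_{z \in S_\rho} |(z-A)^{-1}|_{L(H)} < \infty$. Let $F \colon \ell_{2,\rho}(\mathbb{Z}; H) \to \ell_{2,\rho}(\mathbb{Z}; H)$ be Lipschitz continuous with Lipschitz constant $|F|_{\operatorname{Lip}(\ell_{2,\rho}(\mathbb{Z}; H))} < 1/M_\rho$. Then for each $x \in H$ there exists a unique $u \in \ell_{2,\rho}(\mathbb{Z}; H)$ with $$\tau u = Au + F(u) + \delta_{-1} x.$$
   Context: $H$ is a separable complex Hilbert space, $\sigma(A)$ is the spectrum of $A$, $S_\rho = \{z\in\mathbb{C}: |z|=\rho\}$. $\ell_{2,\rho}(\mathbb{Z}; H) = \{u \in H^{\mathbb{Z}} : \sum_{k} |u_k|_H^2 \rho^{-2k} < \infty\}$ with norm $(\sum_k|u_k|_H^2\rho^{-2k})^{1/2}$. $\tau$ is the shift $(\tau u)_n = u_{n+1}$, $Au = (Au_n)_n$, and $\delta_{-1}x$ is the sequence with entry $x$ at index $-1$ and $0$ elsewhere. *)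

theory Defs
  imports "HOL-Analysis.Analysis"
begin

text \<open>Complex Hilbert spaces: a real Hilbert space (real part of the complex inner
product) together with a complex scalar multiplication extending the real one,
for which multiplication by the imaginary unit is orthogonal.\<close>

class complex_hilbert = real_inner + complete_space +
  fixes scaleC :: "complex \<Rightarrow> 'a \<Rightarrow> 'a" (infixr \<open>*\<^sub>C\<close> 75)
  assumes scaleC_add_right: "scaleC a (x + y) = scaleC a x + scaleC a y"
    and scaleC_add_left: "scaleC (a + b) x = scaleC a x + scaleC b x"
    and scaleC_scaleC: "scaleC a (scaleC b x) = scaleC (a * b) x"
    and scaleC_of_real: "scaleC (complex_of_real r) x = r *\<^sub>R x"
    and inner_scaleC_ii: "inner (scaleC \<i> x) (scaleC \<i> y) = inner x y"

definition separable_space :: "'a::topological_space itself \<Rightarrow> bool" where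
  "separable_space _ \<longleftrightarrow> (\<exists>D::'a set. countable D \<and> closure D = UNIV)"

definition bounded_clinear :: "('a::complex_hilbert \<Rightarrow> 'b::complex_hilbert) \<Rightarrow> bool" where
  "bounded_clinear T \<longleftrightarrow>
     (\<forall>x y. T (x + y) = T x + T y) \<and> (\<forall>c x. T (c *\<^sub>C x) = c *\<^sub>C T x) \<and>
     (\<exists>K. \<forall>x. norm (T x) \<le> K * norm x)"

definition zminus :: "complex \<Rightarrow> ('a::complex_hilbert \<Rightarrow> 'a) \<Rightarrow> 'a \<Rightarrow> 'a" where
  "zminus z A = (\<lambda>x. z *\<^sub>C x - A x)"

definition spectrum :: "('a::complex_hilbert \<Rightarrow> 'a) \<Rightarrow> complex set" where
  "spectrum A = {z. \<not> (\<exists>B. bounded_clinear B \<and> (\<forall>x. B (zminus z A x) = x) \<and> (\<forall>x. zminus z A (B x) = x))}"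

text \<open>Resolvent (z - A)^{-1} (meaningful for z outside the spectrum).\<close>
definition resolvent :: "('a::complex_hilbert \<Rightarrow> 'a) \<Rightarrow> complex \<Rightarrow> 'a \<Rightarrow> 'a" where
  "resolvent A z = inv (zminus z A)"

definition M_rho :: "('a::complex_hilbert \<Rightarrow> 'a) \<Rightarrow> real \<Rightarrow> real" where
  "M_rho A \<rho> = (SUP z\<in>sphere 0 \<rho>. onorm (resolvent A z))"

definition l2rho :: "real \<Rightarrow> (int \<Rightarrow> 'a::real_normed_vector) set" where
  "l2rho \<rho> = {u. (\<lambda>k. (norm (u k))\<^sup>2 * \<rho> powr (- 2 * real_of_int k)) summable_on UNIV}"

definition norm_l2rho :: "real \<Rightarrow> (int \<Rightarrow> 'a::real_normed_vector) \<Rightarrow> real" where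
  "norm_l2rho \<rho> u = sqrt (\<Sum>\<^sub>\<infinity>k. (norm (u k))\<^sup>2 * \<rho> powr (- 2 * real_of_int k))"

text \<open>Lipschitz constant of a self-map of l_{2,rho} (infimum of admissible constants;
it is itself admissible).\<close>
definition lip_l2rho :: "real \<Rightarrow> ((int \<Rightarrow> 'a::real_normed_vector) \<Rightarrow> (int \<Rightarrow> 'a)) \<Rightarrow> real" where
  "lip_l2rho \<rho> F = Inf {L. 0 \<le> L \<and> (\<forall>u\<in>l2rho \<rho>. \<forall>v\<in>l2rho \<rho>.
        norm_l2rho \<rho> (F u - F v) \<le> L * norm_l2rho \<rho> (u - v))}"

definition lipschitz_l2rho :: "real \<Rightarrow> ((int \<Rightarrow> 'a::real_normed_vector) \<Rightarrow> (int \<Rightarrow> 'a)) \<Rightarrow> bool" where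
  "lipschitz_l2rho \<rho> F \<longleftrightarrow> (\<exists>L. \<forall>u\<in>l2rho \<rho>. \<forall>v\<in>l2rho \<rho>.
        norm_l2rho \<rho> (F u - F v) \<le> L * norm_l2rho \<rho> (u - v))"

definition shift :: "(int \<Rightarrow> 'a) \<Rightarrow> int \<Rightarrow> 'a" where
  "shift u = (\<lambda>n. u (n + 1))"

definition delta_m1 :: "'a::zero \<Rightarrow> int \<Rightarrow> 'a" where
  "delta_m1 x = (\<lambda>n. if n = -1 then x else 0)"

end

theory Submission
  imports Defs
begin

text \<open>
  Substituting \<open>u n = \<rho> ^ n * v n\<close> identifies \<open>\<ell>\<^sub>2\<^sub>,\<^sub>\<rho>(\<int>; H)\<close> isometrically with
  \<open>\<ell>\<^sup>2(\<int>; H)\<close> and turns \<open>\<tau> u - A u\<close> into \<open>\<rho> ^ n * (T v) n\<close> with \<open>T v = \<rho> \<tau> v - A v\<close>.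
  Under the Fourier series \<open>T\<close> becomes multiplication by \<open>\<rho> e\<^sup>i\<^sup>\<theta> - A\<close>, so \<open>T\<close> is invertible
  with \<open>\<parallel>T\<^sup>-\<^sup>1\<parallel> \<le> M\<^sub>\<rho>\<close>; since \<open>M\<^sub>\<rho> |F|\<^sub>L\<^sub>i\<^sub>p < 1\<close>, the transported equation
  \<open>T v = G v + d\<close> has a unique solution by Banach's fixed point theorem.

  Instead of the Fourier series we use discrete Fourier transforms of period \<open>P\<close>, which only
  involve the resolvent at the points \<open>\<rho> e\<^sup>2\<^sup>\<pi>\<^sup>i\<^sup>j\<^sup>/\<^sup>P\<close>.  For finitely supported \<open>v\<close> they give
  \<open>\<parallel>v\<parallel> \<le> M\<^sub>\<rho> \<parallel>T v\<parallel>\<close> exactly, and by density the bound holds for all \<open>v\<close>; hence \<open>T\<close> has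
  closed range.  The range is also dense: for finitely supported \<open>g\<close>, the \<open>P\<close>-periodic solution
  of \<open>T w = g\<close>, cut off at a point where it is small, solves \<open>T v = g\<close> up to an error of order
  \<open>Q\<^sup>-\<^sup>1\<^sup>/\<^sup>2\<close>, where \<open>Q\<close> is the gap between consecutive copies of the support of \<open>g\<close>.
\<close>

section \<open>The sequence space \<open>\<ell>\<^sup>2(\<int>; H)\<close>\<close>

definition l2_seqs :: "(int \<Rightarrow> 'a::real_normed_vector) set" where
  "l2_seqs = {f. (\<lambda>k. (norm (f k))\<^sup>2) summable_on UNIV}"

lemma norm_add_squared_le:
  "(norm (a + b :: 'a::real_normed_vector))\<^sup>2 \<le> 2 * (norm a)\<^sup>2 + 2 * (norm b)\<^sup>2"
proof -
  have "(norm (a + b))\<^sup>2 \<le> (norm a + norm b)\<^sup>2"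
    by (simp add: norm_triangle_ineq power_mono)
  also have "\<dots> \<le> 2 * (norm a)\<^sup>2 + 2 * (norm b)\<^sup>2"
    using sum_squares_bound[of "norm a" "norm b"] by (simp add: power2_eq_square algebra_simps)
  finally show ?thesis .
qed

lemma l2_seqs_zero: "(\<lambda>_. 0) \<in> l2_seqs"
  by (simp add: l2_seqs_def)

lemma l2_seqs_add: "f \<in> l2_seqs \<Longrightarrow> g \<in> l2_seqs \<Longrightarrow> (\<lambda>k. f k + g k) \<in> l2_seqs"
  unfolding l2_seqs_def mem_Collect_eq
  by (rule summable_on_comparison_test[where f="\<lambda>k. 2 * (norm (f k))\<^sup>2 + 2 * (norm (g k))\<^sup>2"])
     (auto intro!: summable_on_add summable_on_cmult_right norm_add_squared_le)

lemma l2_seqs_scaleR: "f \<in> l2_seqs \<Longrightarrow> (\<lambda>k. c *\<^sub>R f k) \<in> l2_seqs"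
  unfolding l2_seqs_def by (auto simp: power_mult_distrib intro!: summable_on_cmult_right)

lemma l2_seqs_uminus: "f \<in> l2_seqs \<Longrightarrow> (\<lambda>k. - f k) \<in> l2_seqs"
  using l2_seqs_scaleR[of f "-1"] by simp

lemma l2_seqs_diff: "f \<in> l2_seqs \<Longrightarrow> g \<in> l2_seqs \<Longrightarrow> (\<lambda>k. f k - g k) \<in> l2_seqs"
  using l2_seqs_add[of f "\<lambda>k. - g k"] l2_seqs_uminus[of g] by simp

lemma l2_seqs_finite_support:
  assumes "finite S" "\<And>n. n \<notin> S \<Longrightarrow> f n = 0"
  shows "f \<in> l2_seqs"
proof -
  have "finite {n \<in> UNIV. (norm (f n))\<^sup>2 \<noteq> 0}"
    by (rule finite_subset[OF _ assms(1)]) (use assms in auto)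
  then show ?thesis
    unfolding l2_seqs_def by (simp add: finite_nonzero_values_imp_summable_on)
qed

lemma l2_seqs_inner_summable:
  assumes "f \<in> l2_seqs" "g \<in> l2_seqs"
  shows "(\<lambda>k. inner (f k) (g k :: 'a::real_inner)) summable_on UNIV"
proof -
  have bound: "\<bar>inner (f k) (g k)\<bar> \<le> (norm (f k))\<^sup>2 + (norm (g k))\<^sup>2" for k
    using Cauchy_Schwarz_ineq2[of "f k" "g k"] sum_squares_bound[of "norm (f k)" "norm (g k)"]
    by (simp add: power2_eq_square)
  have "(\<lambda>k. (norm (f k))\<^sup>2 + (norm (g k))\<^sup>2) summable_on UNIV"
    using assms by (intro summable_on_add) (auto simp: l2_seqs_def)
  then have "(\<lambda>k. norm (inner (f k) (g k))) summable_on UNIV"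
    by (rule summable_on_comparison_test) (simp_all add: bound)
  then show ?thesis by (rule abs_summable_summable)
qed

text \<open>\<open>\<ell>\<^sup>2(\<int>; H)\<close> is introduced as a type so that it is an instance of \<open>banach\<close> and
  \<open>banach_fix_type\<close> applies.\<close>
typedef (overloaded) 'a l2 = "l2_seqs :: (int \<Rightarrow> 'a::real_inner) set"
  using l2_seqs_zero by blast

lemma l2_eqI: "(\<And>k. Rep_l2 x k = Rep_l2 y k) \<Longrightarrow> x = y"
  by (metis ext Rep_l2_inject)

instantiation l2 :: (real_inner) real_inner
begin

definition zero_l2_def: "0 = Abs_l2 (\<lambda>_. 0)"
definition plus_l2_def: "x + y = Abs_l2 (\<lambda>k. Rep_l2 x k + Rep_l2 y k)"
definition minus_l2_def: "x - y = Abs_l2 (\<lambda>k. Rep_l2 x k - Rep_l2 y k)"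
definition uminus_l2_def: "- x = Abs_l2 (\<lambda>k. - Rep_l2 x k)"
definition scaleR_l2_def: "c *\<^sub>R x = Abs_l2 (\<lambda>k. c *\<^sub>R Rep_l2 x k)"
definition inner_l2_def: "inner x y = (\<Sum>\<^sub>\<infinity>k. inner (Rep_l2 x k) (Rep_l2 y k))"
definition norm_l2_def: "norm x = sqrt (\<Sum>\<^sub>\<infinity>k. (norm (Rep_l2 x k))\<^sup>2)"
definition sgn_l2_def: "sgn x = inverse (norm x) *\<^sub>R (x::'a l2)"
definition dist_l2_def: "dist x y = norm (x - y::'a l2)"
definition uniformity_l2_def:
  "uniformity = (INF e\<in>{0<..}. principal {(x::'a l2, y). dist x y < e})"
definition open_l2_def:
  "open U = (\<forall>x\<in>U. \<forall>\<^sub>F (x', y) in uniformity. x' = x \<longrightarrow> y \<in> (U::'a l2 set))"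

lemma Rep_l2_zero: "Rep_l2 0 = (\<lambda>_. 0)"
  unfolding zero_l2_def by (rule Abs_l2_inverse, rule l2_seqs_zero)

lemma Rep_l2_plus: "Rep_l2 (x + y) = (\<lambda>k. Rep_l2 x k + Rep_l2 y k)"
  unfolding plus_l2_def by (rule Abs_l2_inverse, rule l2_seqs_add; rule Rep_l2)

lemma Rep_l2_minus: "Rep_l2 (x - y) = (\<lambda>k. Rep_l2 x k - Rep_l2 y k)"
  unfolding minus_l2_def by (rule Abs_l2_inverse, rule l2_seqs_diff; rule Rep_l2)

lemma Rep_l2_uminus: "Rep_l2 (- x) = (\<lambda>k. - Rep_l2 x k)"
  unfolding uminus_l2_def by (rule Abs_l2_inverse, rule l2_seqs_uminus, rule Rep_l2)

lemma Rep_l2_scaleR: "Rep_l2 (c *\<^sub>R x) = (\<lambda>k. c *\<^sub>R Rep_l2 x k)"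
  unfolding scaleR_l2_def by (rule Abs_l2_inverse, rule l2_seqs_scaleR, rule Rep_l2)

lemmas Rep_l2_simps = Rep_l2_zero Rep_l2_plus Rep_l2_minus Rep_l2_uminus Rep_l2_scaleR

instance
proof
  fix x y z :: "'a l2" and a b :: real
  show "x + y + z = x + (y + z)" by (rule l2_eqI) (simp add: Rep_l2_simps add.assoc)
  show "x + y = y + x" by (rule l2_eqI) (simp add: Rep_l2_simps add.commute)
  show "0 + x = x" by (rule l2_eqI) (simp add: Rep_l2_simps)
  show "- x + x = 0" by (rule l2_eqI) (simp add: Rep_l2_simps)
  show "x - y = x + - y" by (rule l2_eqI) (simp add: Rep_l2_simps)
  show "a *\<^sub>R (x + y) = a *\<^sub>R x + a *\<^sub>R y" by (rule l2_eqI) (simp add: Rep_l2_simps scaleR_add_right)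
  show "(a + b) *\<^sub>R x = a *\<^sub>R x + b *\<^sub>R x" by (rule l2_eqI) (simp add: Rep_l2_simps scaleR_add_left)
  show "a *\<^sub>R b *\<^sub>R x = (a * b) *\<^sub>R x" by (rule l2_eqI) (simp add: Rep_l2_simps)
  show "1 *\<^sub>R x = x" by (rule l2_eqI) (simp add: Rep_l2_simps)
  show "sgn x = inverse (norm x) *\<^sub>R x" by (simp add: sgn_l2_def)
  show "dist x y = norm (x - y)" by (simp add: dist_l2_def)
  show "uniformity = (INF e\<in>{0<..}. principal {(x::'a l2, y). dist x y < e})"
    by (simp add: uniformity_l2_def)
  show "open U = (\<forall>x\<in>U. \<forall>\<^sub>F (x', y) in uniformity. x' = x \<longrightarrow> y \<in> U)" for U :: "'a l2 set"
    by (simp add: open_l2_def)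
  show "inner x y = inner y x" by (simp add: inner_l2_def inner_commute)
  show "inner (x + y) z = inner x z + inner y z"
    by (simp add: inner_l2_def Rep_l2_simps inner_add_left infsum_add l2_seqs_inner_summable Rep_l2)
  show "inner (a *\<^sub>R x) y = a * inner x y"
    by (simp add: inner_l2_def Rep_l2_simps infsum_cmult_right l2_seqs_inner_summable Rep_l2)
  show "0 \<le> inner x x" by (simp add: inner_l2_def infsum_nonneg)
  show "inner x x = 0 \<longleftrightarrow> x = 0"
  proof
    assume "inner x x = 0"
    then have "inner (Rep_l2 x k) (Rep_l2 x k) = 0" for k
      using nonneg_infsum_le_0D[where f="\<lambda>k. inner (Rep_l2 x k) (Rep_l2 x k)" and A=UNIV]
      by (auto simp: inner_l2_def l2_seqs_inner_summable Rep_l2)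
    then show "x = 0" by (intro l2_eqI) (simp add: Rep_l2_zero)
  qed (simp add: inner_l2_def Rep_l2_zero)
  show "norm x = sqrt (inner x x)"
    by (simp add: norm_l2_def inner_l2_def power2_norm_eq_inner)
qed

end

lemma norm_l2_squared: "(norm x)\<^sup>2 = (\<Sum>\<^sub>\<infinity>k. (norm (Rep_l2 x k))\<^sup>2)"
  by (simp add: norm_l2_def infsum_nonneg)

lemma sum_le_norm_l2_squared:
  "finite F \<Longrightarrow> (\<Sum>k\<in>F. (norm (Rep_l2 x k))\<^sup>2) \<le> (norm x)\<^sup>2"
  unfolding norm_l2_squared
  by (rule finite_sum_le_infsum) (use Rep_l2 in \<open>auto simp: l2_seqs_def\<close>)

lemma norm_Rep_l2_le: "norm (Rep_l2 x k) \<le> norm x"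
  using sum_le_norm_l2_squared[of "{k}" x] by (simp add: power_mono_iff)

lemma bounded_linear_Rep_l2: "bounded_linear (\<lambda>x. Rep_l2 x k)"
  by (rule bounded_linear_intro[where K=1]) (simp_all add: Rep_l2_simps norm_Rep_l2_le)

lemma norm_l2_squared_finite_support:
  assumes "finite S" "\<And>n. n \<notin> S \<Longrightarrow> Rep_l2 x n = 0"
  shows "(norm x)\<^sup>2 = (\<Sum>n\<in>S. (norm (Rep_l2 x n))\<^sup>2)"
proof -
  have "(\<Sum>\<^sub>\<infinity>n. (norm (Rep_l2 x n))\<^sup>2) = (\<Sum>\<^sub>\<infinity>n\<in>S. (norm (Rep_l2 x n))\<^sup>2)"
    by (rule infsum_cong_neutral) (use assms in auto)
  then show ?thesis
    using assms(1) by (simp add: norm_l2_squared)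
qed

lemma l2_pointwise_limit_dist:
  assumes lim: "\<And>k. (\<lambda>m. Rep_l2 (X m) k) \<longlonglongrightarrow> f k"
    and close: "\<forall>m\<ge>N. norm (x - X m) \<le> e"
  shows "(\<lambda>k. Rep_l2 x k - f k) \<in> l2_seqs" and "(\<Sum>\<^sub>\<infinity>k. (norm (Rep_l2 x k - f k))\<^sup>2) \<le> e\<^sup>2"
proof -
  have partial: "(\<Sum>k\<in>F. (norm (Rep_l2 x k - f k))\<^sup>2) \<le> e\<^sup>2" if "finite F" for F
  proof (rule LIMSEQ_le_const2)
    show "(\<lambda>m. \<Sum>k\<in>F. (norm (Rep_l2 x k - Rep_l2 (X m) k))\<^sup>2)
            \<longlonglongrightarrow> (\<Sum>k\<in>F. (norm (Rep_l2 x k - f k))\<^sup>2)"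
      by (intro tendsto_intros lim)
    show "\<exists>N. \<forall>m\<ge>N. (\<Sum>k\<in>F. (norm (Rep_l2 x k - Rep_l2 (X m) k))\<^sup>2) \<le> e\<^sup>2"
    proof (intro exI allI impI)
      fix m assume "N \<le> m"
      have "(\<Sum>k\<in>F. (norm (Rep_l2 x k - Rep_l2 (X m) k))\<^sup>2) \<le> (norm (x - X m))\<^sup>2"
        using sum_le_norm_l2_squared[OF that, of "x - X m"] by (simp add: Rep_l2_minus)
      also have "\<dots> \<le> e\<^sup>2"
        using close \<open>N \<le> m\<close> by (simp add: power_mono)
      finally show "(\<Sum>k\<in>F. (norm (Rep_l2 x k - Rep_l2 (X m) k))\<^sup>2) \<le> e\<^sup>2" .
    qed
  qed
  have "(\<lambda>k. (norm (Rep_l2 x k - f k))\<^sup>2) summable_on UNIV"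
    by (rule nonneg_bdd_above_summable_on) (auto intro!: bdd_aboveI[where M="e\<^sup>2"] partial)
  then show "(\<lambda>k. Rep_l2 x k - f k) \<in> l2_seqs"
    and "(\<Sum>\<^sub>\<infinity>k. (norm (Rep_l2 x k - f k))\<^sup>2) \<le> e\<^sup>2"
    by (auto simp: l2_seqs_def intro!: infsum_le_finite_sums partial)
qed

instance l2 :: ("{real_inner, complete_space}") complete_space
proof
  fix X :: "nat \<Rightarrow> 'a l2"
  assume "Cauchy X"
  then have "Cauchy (\<lambda>m. Rep_l2 (X m) k)" for k
    by (rule bounded_linear.Cauchy[OF bounded_linear_Rep_l2])
  define f where "f k = lim (\<lambda>m. Rep_l2 (X m) k)" for k
  have lim: "(\<lambda>m. Rep_l2 (X m) k) \<longlonglongrightarrow> f k" for k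
    using \<open>Cauchy (\<lambda>m. Rep_l2 (X m) k)\<close> unfolding f_def
    by (simp add: Cauchy_convergent_iff convergent_LIMSEQ_iff)
  have close: "\<exists>N. \<forall>n\<ge>N. \<forall>m\<ge>N. norm (X n - X m) \<le> e" if "e > 0" for e
    using CauchyD[OF \<open>Cauchy X\<close> that] less_imp_le by blast
  obtain N where "\<forall>n\<ge>N. \<forall>m\<ge>N. norm (X n - X m) \<le> 1"
    using close[of 1] by auto
  then have "f \<in> l2_seqs"
    using l2_seqs_diff[OF Rep_l2[of "X N"] l2_pointwise_limit_dist(1)[OF lim, of N "X N" 1]] by simp
  have "X \<longlonglongrightarrow> Abs_l2 f"
  proof (rule LIMSEQ_I)
    fix r :: real
    assume "0 < r"
    then obtain N where N: "\<forall>n\<ge>N. \<forall>m\<ge>N. norm (X n - X m) \<le> r / 2"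
      using close[of "r / 2"] by auto
    have "norm (X n - Abs_l2 f) \<le> r / 2" if "N \<le> n" for n
    proof -
      have "(norm (X n - Abs_l2 f))\<^sup>2 \<le> (r / 2)\<^sup>2"
        using l2_pointwise_limit_dist(2)[OF lim, of N "X n"] N that \<open>f \<in> l2_seqs\<close>
        by (simp add: norm_l2_squared Rep_l2_minus Abs_l2_inverse)
      then show ?thesis
        using \<open>0 < r\<close> by (simp add: power_mono_iff)
    qed
    moreover have "r / 2 < r"
      using \<open>0 < r\<close> by simp
    ultimately show "\<exists>N. \<forall>n\<ge>N. norm (X n - Abs_l2 f) < r"
      by (meson le_less_trans)
  qed
  then show "convergent X" by (auto simp: convergent_def)
qed

instance l2 :: ("{real_inner, complete_space}") banach ..

definition l2_finsupp :: "'a::real_inner l2 set" where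
  "l2_finsupp = {x. \<exists>N\<ge>0. \<forall>n. n \<notin> {-N..N} \<longrightarrow> Rep_l2 x n = 0}"

lemma finite_int_subset_interval:
  fixes F :: "int set"
  assumes "finite F"
  obtains N where "N \<ge> 0" "F \<subseteq> {-N..N}"
proof
  show "0 \<le> (\<Sum>n\<in>F. \<bar>n\<bar>)"
    by (simp add: sum_nonneg)
  show "F \<subseteq> {-(\<Sum>n\<in>F. \<bar>n\<bar>)..(\<Sum>n\<in>F. \<bar>n\<bar>)}"
  proof
    fix n
    assume "n \<in> F"
    then have "\<bar>n\<bar> \<le> (\<Sum>n\<in>F. \<bar>n\<bar>)"
      by (rule member_le_sum) (simp_all add: assms)
    then show "n \<in> {-(\<Sum>n\<in>F. \<bar>n\<bar>)..(\<Sum>n\<in>F. \<bar>n\<bar>)}"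
      by auto
  qed
qed

lemma infsum_tail_le:
  fixes f :: "'a \<Rightarrow> real"
  assumes f: "f summable_on UNIV" and nonneg: "\<And>x. 0 \<le> f x" and "e > 0"
  obtains F where "finite F" "\<And>W. F \<subseteq> W \<Longrightarrow> (\<Sum>\<^sub>\<infinity>x\<in>-W. f x) \<le> e"
proof -
  obtain F where F: "finite F" "dist (sum f F) (\<Sum>\<^sub>\<infinity>x. f x) \<le> e"
    using infsum_finite_approximation[OF f \<open>e > 0\<close>] by auto
  have "(\<Sum>\<^sub>\<infinity>x\<in>-W. f x) \<le> e" if "F \<subseteq> W" for W
  proof -
    have "(\<Sum>\<^sub>\<infinity>x. f x) = (\<Sum>\<^sub>\<infinity>x\<in>W. f x) + (\<Sum>\<^sub>\<infinity>x\<in>-W. f x)"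
      using infsum_Un_disjoint[of f W "-W"] f by (simp add: summable_on_subset_banach)
    moreover have "sum f F \<le> (\<Sum>\<^sub>\<infinity>x\<in>W. f x)"
      using that F(1) nonneg by (intro finite_sum_le_infsum) (auto intro: summable_on_subset_banach[OF f])
    ultimately show ?thesis
      using F(2) unfolding dist_real_def abs_le_iff by linarith
  qed
  with F(1) show thesis by (rule that)
qed

lemma closure_l2_finsupp: "closure l2_finsupp = UNIV"
proof -
  have "\<exists>y\<in>l2_finsupp. dist y x < e" if "e > 0" for x :: "'a l2" and e
  proof -
    define f where "f n = (norm (Rep_l2 x n))\<^sup>2" for n
    have summable: "f summable_on UNIV"
      using Rep_l2[of x] unfolding f_def by (simp add: l2_seqs_def)
    obtain F where "finite F" and tail: "\<And>W. F \<subseteq> W \<Longrightarrow> (\<Sum>\<^sub>\<infinity>n\<in>-W. f n) \<le> e\<^sup>2 / 2"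
      by (rule infsum_tail_le[OF summable, where e="e\<^sup>2 / 2"]) (use \<open>e > 0\<close> in \<open>simp_all add: f_def\<close>)
    obtain N where "N \<ge> 0" "F \<subseteq> {-N..N}"
      using finite_int_subset_interval[OF \<open>finite F\<close>] by blast
    define y where "y = Abs_l2 (\<lambda>n. if n \<in> {-N..N} then Rep_l2 x n else 0)"
    have Rep_y: "Rep_l2 y = (\<lambda>n. if n \<in> {-N..N} then Rep_l2 x n else 0)"
      unfolding y_def by (rule Abs_l2_inverse, rule l2_seqs_finite_support[of "{-N..N}"]) auto
    have "(norm (x - y))\<^sup>2 = (\<Sum>\<^sub>\<infinity>n\<in>-{-N..N}. f n)"
      unfolding norm_l2_squared by (rule infsum_cong_neutral) (auto simp: Rep_l2_minus Rep_y f_def)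
    also have "\<dots> < e\<^sup>2"
      using tail[OF \<open>F \<subseteq> {-N..N}\<close>] zero_less_power[OF \<open>e > 0\<close>, of 2] by linarith
    finally have "dist y x < e"
      using \<open>e > 0\<close> by (simp add: dist_norm norm_minus_commute power_less_imp_less_base)
    moreover have "y \<in> l2_finsupp"
      unfolding l2_finsupp_def mem_Collect_eq Rep_y using \<open>N \<ge> 0\<close> by auto
    ultimately show ?thesis by blast
  qed
  then show ?thesis by (auto simp: closure_approachable)
qed

lemma l2_seqs_shift:
  assumes "f \<in> l2_seqs"
  shows "(\<lambda>n. f (n + 1)) \<in> l2_seqs"
proof -
  have "(\<lambda>n. (norm (f n))\<^sup>2) summable_on UNIV \<longleftrightarrow> (\<lambda>n. (norm (f (n + 1)))\<^sup>2) summable_on UNIV"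
    by (rule summable_on_reindex_bij_witness[where i="\<lambda>n. n + 1" and j="\<lambda>n. n - 1"]) auto
  then show ?thesis
    using assms by (simp add: l2_seqs_def)
qed

definition l2_shift :: "'a::real_inner l2 \<Rightarrow> 'a l2" where
  "l2_shift x = Abs_l2 (\<lambda>n. Rep_l2 x (n + 1))"

lemma Rep_l2_shift: "Rep_l2 (l2_shift x) = (\<lambda>n. Rep_l2 x (n + 1))"
  unfolding l2_shift_def by (rule Abs_l2_inverse, rule l2_seqs_shift, rule Rep_l2)

lemma norm_l2_shift: "norm (l2_shift x) = norm x"
proof -
  have "(norm (l2_shift x))\<^sup>2 = (norm x)\<^sup>2"
    unfolding norm_l2_squared Rep_l2_shift
    by (rule infsum_reindex_bij_witness[where i="\<lambda>n. n - 1" and j="\<lambda>n. n + 1"]) auto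
  then show ?thesis by (simp add: power2_eq_iff_nonneg)
qed

lemma bounded_linear_l2_shift: "bounded_linear l2_shift"
  by (rule bounded_linear_intro[where K=1])
     (auto intro: l2_eqI simp: Rep_l2_shift Rep_l2_simps norm_l2_shift)

lemma l2_seqs_map:
  assumes "bounded_linear B" "f \<in> l2_seqs"
  shows "(\<lambda>n. B (f n)) \<in> l2_seqs"
proof -
  have "(norm (B (f n)))\<^sup>2 \<le> (onorm B)\<^sup>2 * (norm (f n))\<^sup>2" for n
    using onorm[OF assms(1), of "f n"] by (simp add: power_mono flip: power_mult_distrib)
  moreover have "(\<lambda>n. (onorm B)\<^sup>2 * (norm (f n))\<^sup>2) summable_on UNIV"
    using assms(2) by (intro summable_on_cmult_right) (simp add: l2_seqs_def)
  ultimately show ?thesis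
    unfolding l2_seqs_def by (auto intro: summable_on_comparison_test)
qed

definition l2_map :: "('a::real_inner \<Rightarrow> 'b::real_inner) \<Rightarrow> 'a l2 \<Rightarrow> 'b l2" where
  "l2_map B x = Abs_l2 (\<lambda>n. B (Rep_l2 x n))"

lemma Rep_l2_map: "bounded_linear B \<Longrightarrow> Rep_l2 (l2_map B x) = (\<lambda>n. B (Rep_l2 x n))"
  unfolding l2_map_def by (rule Abs_l2_inverse, rule l2_seqs_map, assumption, rule Rep_l2)

lemma norm_l2_map_le:
  assumes "bounded_linear B"
  shows "norm (l2_map B x) \<le> onorm B * norm x"
proof -
  have "(norm (B (Rep_l2 x n)))\<^sup>2 \<le> (onorm B)\<^sup>2 * (norm (Rep_l2 x n))\<^sup>2" for n
    using onorm[OF assms, of "Rep_l2 x n"] by (simp add: power_mono flip: power_mult_distrib)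
  then have "(norm (l2_map B x))\<^sup>2 \<le> (onorm B)\<^sup>2 * (norm x)\<^sup>2"
    unfolding norm_l2_squared Rep_l2_map[OF assms] infsum_cmult_right'[symmetric]
    using l2_seqs_map[OF assms Rep_l2[of x]] Rep_l2[of x]
    by (intro infsum_mono) (auto simp: l2_seqs_def intro: summable_on_cmult_right)
  then show ?thesis
    using onorm_pos_le[OF assms] by (simp add: power2_le_iff_abs_le flip: power_mult_distrib)
qed

lemma bounded_linear_l2_map: "bounded_linear B \<Longrightarrow> bounded_linear (l2_map B)"
  by (rule bounded_linear_intro[where K="onorm B"])
     (auto intro: l2_eqI simp: Rep_l2_map Rep_l2_simps norm_l2_map_le linear_simps
        bounded_linear.linear mult.commute)

section \<open>Bounded below operators\<close>

lemma surj_if_bounded_below_dense_range: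
  fixes T :: "'a::banach \<Rightarrow> 'b::banach"
  assumes "bounded_linear T" and below: "\<And>x. norm x \<le> C * norm (T x)"
    and dense: "closure (range T) = UNIV"
  shows "surj T"
proof -
  have "norm x \<le> (max C 0 + 1) * norm (T x)" for x
    using below[of x] by (smt (verit) mult_right_mono norm_ge_zero)
  then have "\<forall>x\<in>UNIV. inverse (max C 0 + 1) * norm x \<le> norm (T x)"
    by (simp add: field_simps)
  then have "complete (range T)"
    by (intro complete_isometric_image assms(1)) (auto simp: complete_UNIV)
  then show ?thesis
    using dense complete_imp_closed closure_closed by metis
qed

lemma ex1_solution_bounded_below_contraction:
  fixes T G :: "'a::banach \<Rightarrow> 'b::real_normed_vector"
  assumes "linear T" "surj T" and below: "\<And>x. norm x \<le> M * norm (T x)"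
    and lip: "\<And>u v. norm (G u - G v) \<le> L * norm (u - v)"
    and "0 \<le> M" "0 \<le> L" "M * L < 1"
  shows "\<exists>!u. T u = G u"
proof -
  have inj: "u = v" if "T u = T v" for u v
    using below[of "u - v"] that by (simp add: linear_diff[OF assms(1)])
  define \<Phi> where "\<Phi> u = inv T (G u)" for u
  have T_\<Phi>: "T (\<Phi> u) = G u" for u
    unfolding \<Phi>_def by (rule surj_f_inv_f[OF assms(2)])
  have "dist (\<Phi> u) (\<Phi> v) \<le> (M * L) * dist u v" for u v
  proof -
    have "dist (\<Phi> u) (\<Phi> v) \<le> M * norm (G u - G v)"
      using below[of "\<Phi> u - \<Phi> v"] by (simp add: dist_norm linear_diff[OF assms(1)] T_\<Phi>)
    also have "\<dots> \<le> M * (L * dist u v)"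
      using lip[of u v] \<open>0 \<le> M\<close> by (simp add: dist_norm mult_left_mono)
    finally show ?thesis by simp
  qed
  then have "\<exists>!u. \<Phi> u = u"
    using assms(5-7) by (intro banach_fix_type) auto
  moreover have "T u = G u \<longleftrightarrow> \<Phi> u = u" for u
    using inj[of "\<Phi> u" u] T_\<Phi>[of u] by metis
  ultimately show ?thesis by simp
qed

lemma ex1_transfer:
  assumes "\<And>y. from y \<in> S" "\<And>y. to (from y) = y" "\<And>u. u \<in> S \<Longrightarrow> from (to u) = u"
    and "\<And>u. u \<in> S \<Longrightarrow> P u \<longleftrightarrow> Q (to u)" and "\<exists>!y. Q y"
  shows "\<exists>!u. u \<in> S \<and> P u"
proof -
  obtain y where "Q y" and unique: "\<And>y'. Q y' \<Longrightarrow> y' = y"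
    using assms(5) by blast
  show ?thesis
  proof (rule ex1I[of _ "from y"])
    show "from y \<in> S \<and> P (from y)"
      using assms(1,2,4) \<open>Q y\<close> by simp
    show "u = from y" if "u \<in> S \<and> P u" for u
      using assms(3,4) unique[of "to u"] that by metis
  qed
qed

section \<open>Complex scalars and bounded complex-linear operators\<close>

lemma scaleC_zero_left [simp]: "(0::complex) *\<^sub>C (x::'a::complex_hilbert) = 0"
  using scaleC_of_real[of 0 x] by simp

lemma scaleC_zero_right [simp]: "a *\<^sub>C (0::'a::complex_hilbert) = 0"
  using scaleC_add_right[of a "0::'a" 0] by simp

lemma scaleC_minus_right: "a *\<^sub>C (- x) = - (a *\<^sub>C (x::'a::complex_hilbert))"
  using minus_unique[of "a *\<^sub>C x" "a *\<^sub>C (- x)"] scaleC_add_right[of a x "- x"] by simp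

lemma scaleC_diff_right: "a *\<^sub>C (x - y) = a *\<^sub>C x - a *\<^sub>C (y::'a::complex_hilbert)"
  using scaleC_add_right[of a x "- y"] scaleC_minus_right[of a y] by simp

lemma scaleC_minus_left: "(- a) *\<^sub>C x = - (a *\<^sub>C (x::'a::complex_hilbert))"
  using minus_unique[of "a *\<^sub>C x" "(- a) *\<^sub>C x"] scaleC_add_left[of a "- a" x] by simp

lemma scaleC_diff_left: "(a - b) *\<^sub>C x = a *\<^sub>C x - b *\<^sub>C (x::'a::complex_hilbert)"
  using scaleC_add_left[of a "- b" x] scaleC_minus_left[of b x] by simp

lemma scaleC_sum_right: "a *\<^sub>C sum f S = (\<Sum>i\<in>S. a *\<^sub>C (f i::'a::complex_hilbert))"
  by (induction S rule: infinite_finite_induct) (simp_all add: scaleC_add_right)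

lemma scaleC_sum_left: "sum c S *\<^sub>C x = (\<Sum>i\<in>S. c i *\<^sub>C (x::'a::complex_hilbert))"
  by (induction S rule: infinite_finite_induct) (simp_all add: scaleC_add_left)

lemma scaleR_scaleC: "r *\<^sub>R (a *\<^sub>C x) = (of_real r * a) *\<^sub>C (x::'a::complex_hilbert)"
  by (metis scaleC_of_real scaleC_scaleC)

lemma scaleC_scaleR: "a *\<^sub>C (r *\<^sub>R x) = (a * of_real r) *\<^sub>C (x::'a::complex_hilbert)"
  by (metis scaleC_of_real scaleC_scaleC)

lemma scaleC_Re_Im: "a *\<^sub>C x = Re a *\<^sub>R x + Im a *\<^sub>R (\<i> *\<^sub>C (x::'a::complex_hilbert))"
proof -
  have "a = complex_of_real (Re a) + complex_of_real (Im a) * \<i>"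
    by (simp add: complex_eq_iff)
  then have "a *\<^sub>C x = complex_of_real (Re a) *\<^sub>C x + (complex_of_real (Im a) * \<i>) *\<^sub>C x"
    by (metis scaleC_add_left)
  then show ?thesis by (simp add: scaleC_of_real flip: scaleC_scaleC)
qed

lemma inner_scaleC_ii_left: "inner (\<i> *\<^sub>C x) y = - inner x (\<i> *\<^sub>C (y::'a::complex_hilbert))"
proof -
  have "inner (\<i> *\<^sub>C x) y = inner (\<i> *\<^sub>C (\<i> *\<^sub>C x)) (\<i> *\<^sub>C y)"
    by (simp add: inner_scaleC_ii)
  also have "\<i> *\<^sub>C (\<i> *\<^sub>C x) = - x"
    using scaleC_of_real[of "-1" x] by (simp add: scaleC_scaleC)
  finally show ?thesis by simp
qed

lemma inner_scaleC_scaleC: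
  "inner (a *\<^sub>C x) (b *\<^sub>C y) =
     Re (a * cnj b) * inner x y + Im (a * cnj b) * inner (\<i> *\<^sub>C x) (y::'a::complex_hilbert)"
proof -
  have "inner x (\<i> *\<^sub>C y) = - inner (\<i> *\<^sub>C x) y"
    by (simp add: inner_scaleC_ii_left)
  then show ?thesis
    unfolding scaleC_Re_Im[of a x] scaleC_Re_Im[of b y]
    by (simp add: inner_add_left inner_add_right inner_scaleC_ii algebra_simps)
qed

lemma norm_scaleC: "norm (a *\<^sub>C x) = cmod a * norm (x::'a::complex_hilbert)"
proof -
  have "a * cnj a = complex_of_real ((cmod a)\<^sup>2)"
    using complex_norm_square[of a] by simp
  then have "(norm (a *\<^sub>C x))\<^sup>2 = (cmod a * norm x)\<^sup>2"
    by (simp add: power2_norm_eq_inner inner_scaleC_scaleC power_mult_distrib)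
  then show ?thesis by (simp add: power2_eq_iff_nonneg)
qed

lemma scaleC_of_int: "of_int k *\<^sub>C x = of_int k *\<^sub>R (x::'a::complex_hilbert)"
  using scaleC_of_real[of "of_int k" x] by simp

lemma bounded_clinear_add: "bounded_clinear T \<Longrightarrow> T (x + y) = T x + T y"
  by (simp add: bounded_clinear_def)

lemma bounded_clinear_scaleC: "bounded_clinear T \<Longrightarrow> T (c *\<^sub>C x) = c *\<^sub>C T x"
  by (simp add: bounded_clinear_def)

lemma bounded_clinear_scaleR: "bounded_clinear T \<Longrightarrow> T (r *\<^sub>R x) = r *\<^sub>R T x"
  by (metis bounded_clinear_scaleC scaleC_of_real)

lemma bounded_clinear_bounded_linear:
  assumes "bounded_clinear T"
  shows "bounded_linear T"
proof -
  obtain K where "\<forall>x. norm (T x) \<le> K * norm x"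
    using assms by (auto simp: bounded_clinear_def)
  then show ?thesis
    using assms
    by (intro bounded_linear_intro[where K=K]) (auto simp: bounded_clinear_add bounded_clinear_scaleR mult.commute)
qed

lemma bounded_clinear_sum:
  assumes "bounded_clinear T"
  shows "T (sum f S) = (\<Sum>i\<in>S. T (f i))"
proof -
  interpret bounded_linear T
    using assms by (rule bounded_clinear_bounded_linear)
  show ?thesis by (rule sum)
qed

section \<open>The resolvent on the circle \<open>|z| = \<rho>\<close>\<close>

lemma resolvent_not_in_spectrum:
  assumes "z \<notin> spectrum A"
  shows "bounded_clinear (resolvent A z)"
    and "zminus z A (resolvent A z y) = y"
    and "resolvent A z (zminus z A y) = y"
proof -
  obtain B where B: "bounded_clinear B" "\<forall>x. B (zminus z A x) = x" "\<forall>x. zminus z A (B x) = x"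
    using assms by (auto simp: spectrum_def)
  have "resolvent A z = B"
    unfolding resolvent_def by (rule inv_equality) (use B in auto)
  with B show "bounded_clinear (resolvent A z)" "zminus z A (resolvent A z y) = y"
    "resolvent A z (zminus z A y) = y" by simp_all
qed

lemma bounded_linear_resolvent: "z \<notin> spectrum A \<Longrightarrow> bounded_linear (resolvent A z)"
  by (simp add: resolvent_not_in_spectrum bounded_clinear_bounded_linear)

lemma onorm_resolvent_nearby:
  assumes z0: "z0 \<notin> spectrum A" and z: "z \<notin> spectrum A"
    and close: "2 * cmod (z - z0) * onorm (resolvent A z0) \<le> 1"
  shows "onorm (resolvent A z) \<le> 2 * onorm (resolvent A z0)"
proof (rule onorm_bound)
  let ?m = "onorm (resolvent A z0)"
  show "0 \<le> 2 * ?m"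
    using onorm_pos_le[OF bounded_linear_resolvent[OF z0]] by simp
  have below: "norm y \<le> 2 * ?m * norm (zminus z A y)" for y
  proof -
    have "zminus z A y + (z0 - z) *\<^sub>C y = zminus z0 A y"
      by (simp add: zminus_def scaleC_diff_left)
    then have "norm y = norm (resolvent A z0 (zminus z A y + (z0 - z) *\<^sub>C y))"
      by (simp add: resolvent_not_in_spectrum[OF z0])
    also have "\<dots> \<le> ?m * norm (zminus z A y + (z0 - z) *\<^sub>C y)"
      by (rule onorm[OF bounded_linear_resolvent[OF z0]])
    also have "\<dots> \<le> ?m * (norm (zminus z A y) + cmod (z - z0) * norm y)"
      using norm_triangle_ineq[of "zminus z A y" "(z0 - z) *\<^sub>C y"] \<open>0 \<le> 2 * ?m\<close>
      by (intro mult_left_mono) (simp_all add: norm_scaleC norm_minus_commute)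
    also have "\<dots> = ?m * norm (zminus z A y) + (cmod (z - z0) * ?m) * norm y"
      by (simp add: algebra_simps)
    also have "\<dots> \<le> ?m * norm (zminus z A y) + norm y / 2"
      using close mult_right_mono[of "2 * cmod (z - z0) * ?m" 1 "norm y"] by simp
    finally show ?thesis by simp
  qed
  show "norm (resolvent A z x) \<le> 2 * ?m * norm x" for x
    using below[of "resolvent A z x"] by (simp add: resolvent_not_in_spectrum[OF z])
qed

lemma compact_locally_bounded_imp_bdd_above:
  fixes f :: "'a::metric_space \<Rightarrow> real"
  assumes "compact S"
    and local: "\<And>x. x \<in> S \<Longrightarrow> \<exists>r>0. \<forall>y\<in>S. dist x y < r \<longrightarrow> f y \<le> g x"
  shows "bdd_above (f ` S)"
proof -
  obtain r where r: "\<And>x. x \<in> S \<Longrightarrow> r x > 0 \<and> (\<forall>y\<in>S. dist x y < r x \<longrightarrow> f y \<le> g x)"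
    using local by metis
  obtain C where C: "C \<subseteq> S" "finite C" "S \<subseteq> (\<Union>c\<in>C. ball c (r c))"
    using \<open>compact S\<close> by (rule compactE_image[of S S "\<lambda>c. ball c (r c)"]) (use r in force)+
  show ?thesis
  proof (rule bdd_aboveI2)
    fix y
    assume "y \<in> S"
    then obtain c where "c \<in> C" "dist c y < r c"
      using C(3) by auto
    then have "f y \<le> \<bar>g c\<bar>"
      using r[of c] C(1) \<open>y \<in> S\<close> by force
    also have "\<dots> \<le> (\<Sum>c\<in>C. \<bar>g c\<bar>)"
      using \<open>c \<in> C\<close> C(2) by (intro member_le_sum) auto
    finally show "f y \<le> (\<Sum>c\<in>C. \<bar>g c\<bar>)" .
  qed
qed

text \<open>Without this bound the supremum defining \<open>M_rho\<close> would be a junk value.\<close>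
lemma bdd_above_onorm_resolvent:
  assumes "spectrum A \<inter> sphere 0 \<rho> = {}"
  shows "bdd_above ((\<lambda>z. onorm (resolvent A z)) ` sphere 0 \<rho>)"
proof (rule compact_locally_bounded_imp_bdd_above[where g="\<lambda>z0. 2 * onorm (resolvent A z0)"])
  fix z0 :: complex
  assume "z0 \<in> sphere 0 \<rho>"
  let ?m = "onorm (resolvent A z0)"
  have "0 \<le> ?m"
    using assms \<open>z0 \<in> sphere 0 \<rho>\<close> by (blast intro: onorm_pos_le bounded_linear_resolvent)
  show "\<exists>r>0. \<forall>z\<in>sphere 0 \<rho>. dist z0 z < r \<longrightarrow> onorm (resolvent A z) \<le> 2 * ?m"
  proof (intro exI[of _ "1 / (2 * (?m + 1))"] conjI ballI impI)
    fix z
    assume "z \<in> sphere 0 \<rho>" and "dist z0 z < 1 / (2 * (?m + 1))"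
    then have "2 * cmod (z - z0) * (?m + 1) \<le> 1"
      using \<open>0 \<le> ?m\<close> by (simp add: dist_norm norm_minus_commute field_simps)
    moreover have "2 * cmod (z - z0) * ?m \<le> 2 * cmod (z - z0) * (?m + 1)"
      by (simp add: mult_left_mono)
    ultimately have "2 * cmod (z - z0) * ?m \<le> 1"
      by linarith
    then show "onorm (resolvent A z) \<le> 2 * ?m"
      using assms \<open>z0 \<in> sphere 0 \<rho>\<close> \<open>z \<in> sphere 0 \<rho>\<close> by (blast intro: onorm_resolvent_nearby)
  qed (use \<open>0 \<le> ?m\<close> in simp)
qed simp

lemma norm_resolvent_le_M_rho:
  assumes "spectrum A \<inter> sphere 0 \<rho> = {}" "cmod z = \<rho>"
  shows "norm (resolvent A z y) \<le> M_rho A \<rho> * norm y"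
proof -
  have "z \<in> sphere 0 \<rho>" "z \<notin> spectrum A"
    using assms by auto
  have "norm (resolvent A z y) \<le> onorm (resolvent A z) * norm y"
    by (rule onorm[OF bounded_linear_resolvent[OF \<open>z \<notin> spectrum A\<close>]])
  also have "\<dots> \<le> M_rho A \<rho> * norm y"
    unfolding M_rho_def
    by (intro mult_right_mono cSUP_upper \<open>z \<in> sphere 0 \<rho>\<close> bdd_above_onorm_resolvent assms(1)) simp
  finally show ?thesis .
qed

lemma M_rho_nonneg:
  assumes "spectrum A \<inter> sphere 0 \<rho> = {}" "\<rho> \<ge> 0"
  shows "0 \<le> M_rho A \<rho>"
proof -
  have \<rho>: "complex_of_real \<rho> \<in> sphere 0 \<rho>"
    using assms(2) by simp
  then have "0 \<le> onorm (resolvent A (complex_of_real \<rho>))"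
    using assms(1) by (blast intro: onorm_pos_le bounded_linear_resolvent)
  also have "\<dots> \<le> M_rho A \<rho>"
    unfolding M_rho_def by (intro cSUP_upper bdd_above_onorm_resolvent assms(1) \<rho>)
  finally show ?thesis .
qed

section \<open>The discrete Fourier transform of \<open>H\<close>-valued sequences\<close>

definition unit_root :: "int \<Rightarrow> int \<Rightarrow> complex" where
  "unit_root P t = cis (2 * pi * of_int t / of_int P)"

lemma unit_root_add: "unit_root P (s + t) = unit_root P s * unit_root P t"
  by (simp add: unit_root_def cis_mult add_divide_distrib distrib_left)

lemma unit_root_zero [simp]: "unit_root P 0 = 1"
  by (simp add: unit_root_def)

lemma cnj_unit_root: "cnj (unit_root P t) = unit_root P (- t)"
  by (simp add: unit_root_def cis_cnj)

lemma norm_unit_root [simp]: "cmod (unit_root P t) = 1"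
  by (simp add: unit_root_def)

lemma unit_root_period:
  assumes "P \<noteq> 0"
  shows "unit_root P (P * t) = 1"
proof -
  have "2 * pi * of_int (P * t) / of_int P = 2 * pi * of_int t"
    using assms by simp
  then show ?thesis by (simp add: unit_root_def)
qed

lemma unit_root_power: "unit_root P t ^ n = unit_root P (t * int n)"
  by (induction n) (simp_all add: unit_root_add[symmetric] algebra_simps)

lemma unit_root_eq_1_imp_dvd:
  assumes "P > 0" "unit_root P t = 1"
  shows "P dvd t"
proof -
  have "cos (2 * pi * of_int t / of_int P) = 1"
    using arg_cong[OF assms(2), of Re] by (simp add: unit_root_def)
  then obtain n :: int where "2 * pi * of_int t / of_int P = of_int n * 2 * pi"
    using cos_one_2pi_int by blast
  then have "of_int t = of_int n * (of_int P :: real)"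
    using assms(1) by (simp add: field_simps)
  then have "t = n * P"
    by (metis of_int_eq_iff of_int_mult)
  then show ?thesis by simp
qed

lemma sum_unit_root_window:
  assumes "P > 0"
  shows "(\<Sum>s\<in>{a..<a+P}. unit_root P (k * s)) = (if P dvd k then of_int P else 0)"
proof -
  have "(\<Sum>s\<in>{a..<a+P}. unit_root P (k * s)) = (\<Sum>i<nat P. unit_root P (k * (a + int i)))"
    by (rule sum.reindex_bij_witness[where i="\<lambda>i. a + int i" and j="\<lambda>s. nat (s - a)"]) auto
  also have "\<dots> = unit_root P (k * a) * (\<Sum>i<nat P. unit_root P k ^ i)"
    by (simp add: unit_root_power sum_distrib_left unit_root_add[symmetric] algebra_simps)
  finally have sum: "(\<Sum>s\<in>{a..<a+P}. unit_root P (k * s)) = \<dots>" .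
  show ?thesis
  proof (cases "P dvd k")
    case True
    then have "unit_root P (k * s) = 1" for s
      using assms by (auto simp: unit_root_period mult.assoc elim!: dvdE)
    with True assms show ?thesis by simp
  next
    case False
    then have "unit_root P k \<noteq> 1"
      using unit_root_eq_1_imp_dvd assms by blast
    moreover have "unit_root P k ^ nat P = 1"
      using assms by (simp add: unit_root_power unit_root_period mult.commute)
    ultimately show ?thesis
      using sum False by (simp add: sum_gp_strict)
  qed
qed

lemma dvd_diff_window_imp_eq:
  fixes n m a P :: int
  assumes "n \<in> {a..<a+P}" "m \<in> {a..<a+P}" "P dvd (m - n)"
  shows "n = m"
proof (rule ccontr)
  assume "n \<noteq> m"
  then have "\<bar>P\<bar> \<le> \<bar>m - n\<bar>"
    using assms(3) by (intro dvd_imp_le_int) auto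
  then show False using assms(1,2) by auto
qed

lemma sum_unit_root_window_orthogonal:
  assumes "P > 0" "n \<in> {a..<a+P}" "m \<in> {a..<a+P}"
  shows "(\<Sum>s\<in>{b..<b+P}. unit_root P (s * (m - n))) = (if n = m then of_int P else 0)"
proof -
  have "(\<Sum>s\<in>{b..<b+P}. unit_root P (s * (m - n))) = (if P dvd (m - n) then of_int P else 0)"
    using sum_unit_root_window[OF assms(1), where a=b and k="m - n"] by (simp only: mult.commute)
  then show ?thesis
    using dvd_diff_window_imp_eq[OF assms(2,3)] by auto
qed

lemma parseval_finite:
  fixes x :: "int \<Rightarrow> 'a::complex_hilbert" and c :: "int \<Rightarrow> int \<Rightarrow> complex"
  assumes "finite I"
    and orth: "\<And>n m. n \<in> I \<Longrightarrow> m \<in> I \<Longrightarrow>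
      (\<Sum>j\<in>J. c j n * cnj (c j m)) = (if n = m then complex_of_real C else 0)"
  shows "(\<Sum>j\<in>J. (norm (\<Sum>n\<in>I. c j n *\<^sub>C x n))\<^sup>2) = C * (\<Sum>n\<in>I. (norm (x n))\<^sup>2)"
proof -
  let ?f = "\<lambda>j n m. Re (c j n * cnj (c j m)) * inner (x n) (x m)
    + Im (c j n * cnj (c j m)) * inner (\<i> *\<^sub>C x n) (x m)"
  have "(norm (\<Sum>n\<in>I. c j n *\<^sub>C x n))\<^sup>2
      = (\<Sum>n\<in>I. \<Sum>m\<in>I. inner (c j n *\<^sub>C x n) (c j m *\<^sub>C x m))" for j
    unfolding power2_norm_eq_inner inner_sum_left unfolding inner_sum_right ..
  then have "(\<Sum>j\<in>J. (norm (\<Sum>n\<in>I. c j n *\<^sub>C x n))\<^sup>2) = (\<Sum>j\<in>J. \<Sum>n\<in>I. \<Sum>m\<in>I. ?f j n m)"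
    unfolding inner_scaleC_scaleC by simp
  also have "\<dots> = (\<Sum>n\<in>I. \<Sum>m\<in>I. \<Sum>j\<in>J. ?f j n m)"
    by (subst sum.swap) (rule sum.cong[OF refl sum.swap])
  also have "\<dots> = (\<Sum>n\<in>I. \<Sum>m\<in>I. Re (\<Sum>j\<in>J. c j n * cnj (c j m)) * inner (x n) (x m)
      + Im (\<Sum>j\<in>J. c j n * cnj (c j m)) * inner (\<i> *\<^sub>C x n) (x m))"
    by (simp only: sum.distrib sum_distrib_right Re_sum Im_sum)
  also have "\<dots> = (\<Sum>n\<in>I. \<Sum>m\<in>I. if n = m then C * inner (x n) (x m) else 0)"
    by (intro sum.cong refl) (simp add: orth)
  also have "\<dots> = (\<Sum>n\<in>I. C * (norm (x n))\<^sup>2)"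
    using \<open>finite I\<close> by (intro sum.cong refl) (simp add: power2_norm_eq_inner)
  finally show ?thesis by (simp add: sum_distrib_left)
qed

definition dft :: "int \<Rightarrow> int set \<Rightarrow> (int \<Rightarrow> 'a::complex_hilbert) \<Rightarrow> int \<Rightarrow> 'a" where
  "dft P S x j = (\<Sum>n\<in>S. unit_root P (- (j * n)) *\<^sub>C x n)"

definition idft :: "int \<Rightarrow> (int \<Rightarrow> 'a::complex_hilbert) \<Rightarrow> int \<Rightarrow> 'a" where
  "idft P y n = inverse (of_int P) *\<^sub>R (\<Sum>j\<in>{0..<P}. unit_root P (n * j) *\<^sub>C y j)"

lemma idft_periodic:
  assumes "P \<noteq> 0"
  shows "idft P y (n + P) = idft P y n"
proof -
  have "unit_root P ((n + P) * j) = unit_root P (n * j)" for j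
    using assms by (simp add: distrib_right unit_root_add unit_root_period)
  then show ?thesis by (simp add: idft_def)
qed

lemma idft_dft:
  assumes "P > 0" "finite S"
  shows "idft P (dft P S x) n = (\<Sum>m\<in>S. if P dvd (n - m) then x m else 0)"
proof -
  have "(\<Sum>j\<in>{0..<P}. unit_root P (n * j) *\<^sub>C dft P S x j)
      = (\<Sum>m\<in>S. (\<Sum>j\<in>{0..<0+P}. unit_root P ((n - m) * j)) *\<^sub>C x m)"
    by (simp add: dft_def scaleC_sum_right scaleC_sum_left scaleC_scaleC unit_root_add[symmetric]
        algebra_simps sum.swap[of _ "{0..<P}"])
  also have "\<dots> = (\<Sum>m\<in>S. of_int P *\<^sub>R (if P dvd (n - m) then x m else 0))"
    using sum_unit_root_window[OF assms(1), where a=0] by (auto simp: scaleC_of_int intro!: sum.cong)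
  finally show ?thesis
    using assms(1) by (simp add: idft_def scaleR_sum_right)
qed

lemma sum_norm_dft:
  assumes "P > 0" "S \<subseteq> {a..<a+P}"
  shows "(\<Sum>j\<in>{0..<P}. (norm (dft P S x j))\<^sup>2) = of_int P * (\<Sum>n\<in>S. (norm (x n))\<^sup>2)"
  unfolding dft_def
proof (rule parseval_finite)
  show "finite S"
    using assms(2) finite_subset by blast
  fix n m
  assume "n \<in> S" "m \<in> S"
  then have "(\<Sum>j\<in>{0..<0+P}. unit_root P (j * (m - n))) = (if n = m then of_int P else 0)"
    using assms by (intro sum_unit_root_window_orthogonal[where a=a]) auto
  then show "(\<Sum>j\<in>{0..<P}. unit_root P (- (j * n)) * cnj (unit_root P (- (j * m))))
      = (if n = m then complex_of_real (of_int P) else 0)"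
    by (simp add: cnj_unit_root unit_root_add[symmetric] algebra_simps)
qed

lemma sum_norm_idft:
  assumes "P > 0"
  shows "(\<Sum>n\<in>{b..<b+P}. (norm (idft P y n))\<^sup>2) = inverse (of_int P) * (\<Sum>j\<in>{0..<P}. (norm (y j))\<^sup>2)"
proof -
  have "(\<Sum>n\<in>{b..<b+P}. (norm (\<Sum>j\<in>{0..<P}. unit_root P (n * j) *\<^sub>C y j))\<^sup>2)
      = of_int P * (\<Sum>j\<in>{0..<P}. (norm (y j))\<^sup>2)"
  proof (rule parseval_finite)
    fix j j'
    assume "j \<in> {0..<P}" "j' \<in> {0..<P}"
    then have "(\<Sum>n\<in>{b..<b+P}. unit_root P (n * (j - j'))) = (if j' = j then of_int P else 0)"
      using assms by (intro sum_unit_root_window_orthogonal[where a=0]) auto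
    then show "(\<Sum>n\<in>{b..<b+P}. unit_root P (n * j) * cnj (unit_root P (n * j')))
        = (if j = j' then complex_of_real (of_int P) else 0)"
      by (auto simp: cnj_unit_root unit_root_add[symmetric] algebra_simps)
  qed simp
  moreover have "(\<Sum>n\<in>{b..<b+P}. (norm (idft P y n))\<^sup>2)
      = (inverse (of_int P))\<^sup>2 * (\<Sum>n\<in>{b..<b+P}. (norm (\<Sum>j\<in>{0..<P}. unit_root P (n * j) *\<^sub>C y j))\<^sup>2)"
    using assms by (simp add: idft_def power_mult_distrib sum_distrib_left)
  ultimately show ?thesis
    using assms by (simp add: power2_eq_square)
qed

lemma sum_shift_window:
  fixes f :: "int \<Rightarrow> 'a::comm_monoid_add"
  assumes "P > 0" "f a = f (a + P)"
  shows "(\<Sum>n\<in>{a..<a+P}. f (n + 1)) = (\<Sum>n\<in>{a..<a+P}. f n)"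
proof -
  have "(\<Sum>n\<in>{a..<a+P}. f (n + 1)) = (\<Sum>n\<in>{a+1..<a+P+1}. f n)"
    by (rule sum.reindex_bij_witness[where i="\<lambda>n. n - 1" and j="\<lambda>n. n + 1"]) auto
  also have "{a+1..<a+P+1} = insert (a + P) {a+1..<a+P}"
    using assms(1) by auto
  also have "sum f \<dots> = f a + sum f {a+1..<a+P}"
    using assms(2) by simp
  also have "\<dots> = sum f (insert a {a+1..<a+P})"
    by simp
  also have "insert a {a+1..<a+P} = {a..<a+P}"
    using assms(1) by auto
  finally show ?thesis .
qed

section \<open>The operator \<open>\<tau> - A\<close> on \<open>\<ell>\<^sup>2(\<int>; H)\<close>\<close>

lemma ex_card_mult_le_sum:
  fixes f :: "'a \<Rightarrow> real"
  assumes "finite S" "S \<noteq> {}"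
  shows "\<exists>x\<in>S. of_nat (card S) * f x \<le> sum f S"
proof -
  obtain x where "x \<in> S" "f x = Min (f ` S)"
    using assms by (metis (mono_tags, opaque_lifting) Min_in finite_imageI image_iff image_is_empty)
  then have "of_nat (card S) * f x \<le> sum f S"
    using assms sum_mono[of S "\<lambda>_. f x" f] by simp
  with \<open>x \<in> S\<close> show ?thesis by blast
qed

locale resolvent_circle =
  fixes A :: "'h::complex_hilbert \<Rightarrow> 'h" and \<rho> :: real
  assumes bounded_clinear_A: "bounded_clinear A"
    and rho_pos: "\<rho> > 0"
    and spectrum_circle: "spectrum A \<inter> sphere 0 \<rho> = {}"
begin

abbreviation M :: real where "M \<equiv> M_rho A \<rho>"

lemma M_nonneg: "0 \<le> M"
  using M_rho_nonneg[OF spectrum_circle] rho_pos by simp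

text \<open>\<open>Tseq\<close> is \<open>\<tau> - A\<close> conjugated by the weight \<open>\<rho>\<^sup>n\<close>: if \<open>u n = \<rho> ^ n * v n\<close> then
  \<open>u (n + 1) - A (u n) = \<rho> ^ n * Tseq v n\<close>.\<close>
definition Tseq :: "(int \<Rightarrow> 'h) \<Rightarrow> int \<Rightarrow> 'h" where
  "Tseq v n = \<rho> *\<^sub>R v (n + 1) - A (v n)"

definition node :: "int \<Rightarrow> int \<Rightarrow> complex" where
  "node P j = complex_of_real \<rho> * unit_root P j"

lemma node_not_in_spectrum: "node P j \<notin> spectrum A"
  using spectrum_circle rho_pos by (auto simp: node_def norm_mult)

lemma sum_norm_resolvent_node_le:
  "(\<Sum>j\<in>J. (norm (resolvent A (node P j) (y j)))\<^sup>2) \<le> M\<^sup>2 * (\<Sum>j\<in>J. (norm (y j))\<^sup>2)"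
proof -
  have "(norm (resolvent A (node P j) (y j)))\<^sup>2 \<le> (M * norm (y j))\<^sup>2" for j
    using norm_resolvent_le_M_rho[OF spectrum_circle, of "node P j"] rho_pos
    by (intro power_mono) (auto simp: node_def norm_mult)
  then show ?thesis
    by (auto simp: sum_distrib_left power_mult_distrib intro: sum_mono)
qed

lemma dft_Tseq:
  assumes "P > 0" "v a = 0" "v (a + P) = 0"
  shows "dft P {a..<a+P} (Tseq v) j = zminus (node P j) A (dft P {a..<a+P} v j)"
proof -
  let ?W = "{a..<a+P}"
  have shifted: "unit_root P (- (j * n)) *\<^sub>C (\<rho> *\<^sub>R v (n + 1))
      = node P j *\<^sub>C (unit_root P (- (j * (n + 1))) *\<^sub>C v (n + 1))" for n
  proof -
    have "unit_root P (- (j * n)) * complex_of_real \<rho> = node P j * unit_root P (- (j * (n + 1)))"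
      by (simp add: node_def unit_root_add[symmetric] algebra_simps)
    then show ?thesis by (simp add: scaleC_scaleR scaleC_scaleC)
  qed
  have "(\<Sum>n\<in>?W. unit_root P (- (j * n)) *\<^sub>C (\<rho> *\<^sub>R v (n + 1)))
      = node P j *\<^sub>C (\<Sum>n\<in>?W. unit_root P (- (j * (n + 1))) *\<^sub>C v (n + 1))"
    by (simp add: shifted scaleC_sum_right)
  also have "(\<Sum>n\<in>?W. unit_root P (- (j * (n + 1))) *\<^sub>C v (n + 1)) = dft P ?W v j"
    unfolding dft_def
    by (rule sum_shift_window[where f="\<lambda>n. unit_root P (- (j * n)) *\<^sub>C v n"]) (simp_all add: assms)
  finally have "(\<Sum>n\<in>?W. unit_root P (- (j * n)) *\<^sub>C (\<rho> *\<^sub>R v (n + 1))) = node P j *\<^sub>C dft P ?W v j" .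
  moreover have "(\<Sum>n\<in>?W. unit_root P (- (j * n)) *\<^sub>C A (v n)) = A (dft P ?W v j)"
    by (simp add: dft_def bounded_clinear_sum[OF bounded_clinear_A] bounded_clinear_scaleC[OF bounded_clinear_A])
  ultimately show ?thesis
    by (simp add: dft_def Tseq_def zminus_def scaleC_diff_right sum_subtractf)
qed

lemma sum_norm_le_M_Tseq:
  assumes "P > 0" and support: "\<And>n. n \<notin> {a+1..<a+P} \<Longrightarrow> v n = 0"
  shows "(\<Sum>n\<in>{a..<a+P}. (norm (v n))\<^sup>2) \<le> M\<^sup>2 * (\<Sum>n\<in>{a..<a+P}. (norm (Tseq v n))\<^sup>2)"
proof -
  let ?W = "{a..<a+P}"
  have "dft P ?W v j = resolvent A (node P j) (dft P ?W (Tseq v) j)" for j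
    using assms by (simp add: dft_Tseq resolvent_not_in_spectrum node_not_in_spectrum)
  then have "of_int P * (\<Sum>n\<in>?W. (norm (v n))\<^sup>2)
      = (\<Sum>j\<in>{0..<P}. (norm (resolvent A (node P j) (dft P ?W (Tseq v) j)))\<^sup>2)"
    using sum_norm_dft[OF \<open>P > 0\<close>, of ?W a v] by simp
  also have "\<dots> \<le> M\<^sup>2 * (\<Sum>j\<in>{0..<P}. (norm (dft P ?W (Tseq v) j))\<^sup>2)"
    by (rule sum_norm_resolvent_node_le)
  also have "\<dots> = of_int P * (M\<^sup>2 * (\<Sum>n\<in>?W. (norm (Tseq v n))\<^sup>2))"
    using sum_norm_dft[OF \<open>P > 0\<close>, of ?W a "Tseq v"] by simp
  finally show ?thesis
    using \<open>P > 0\<close> by simp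
qed

lemma idft_diff: "idft P (\<lambda>j. y j - z j) n = idft P y n - idft P z n"
  by (simp add: idft_def scaleC_diff_right sum_subtractf scaleR_diff_right)

lemma Tseq_idft: "Tseq (idft P y) n = idft P (\<lambda>j. zminus (node P j) A (y j)) n"
proof -
  have "\<rho> *\<^sub>R (unit_root P ((n + 1) * j) *\<^sub>C y j) = unit_root P (n * j) *\<^sub>C (node P j *\<^sub>C y j)" for j
  proof -
    have "complex_of_real \<rho> * unit_root P ((n + 1) * j) = unit_root P (n * j) * node P j"
      by (simp add: node_def distrib_right unit_root_add algebra_simps)
    then show ?thesis by (simp add: scaleR_scaleC scaleC_scaleC)
  qed
  then have "\<rho> *\<^sub>R idft P y (n + 1) = idft P (\<lambda>j. node P j *\<^sub>C y j) n"
    by (simp only: idft_def scaleR_left_commute[of \<rho>] scaleR_sum_right)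
  moreover have "A (idft P y n) = idft P (\<lambda>j. A (y j)) n"
    by (simp add: idft_def bounded_clinear_sum[OF bounded_clinear_A]
        bounded_clinear_scaleC[OF bounded_clinear_A] bounded_clinear_scaleR[OF bounded_clinear_A])
  ultimately show ?thesis
    by (simp add: Tseq_def zminus_def idft_diff)
qed

text \<open>Solving \<open>\<tau> - A = g\<close> for \<open>P\<close>-periodic data: on the \<open>j\<close>-th Fourier mode the equation
  reads \<open>(node P j - A) y = g\<^sub>j\<close>, which the resolvent inverts.\<close>
definition periodic_solution :: "int \<Rightarrow> int set \<Rightarrow> (int \<Rightarrow> 'h) \<Rightarrow> int \<Rightarrow> 'h" where
  "periodic_solution P S g = idft P (\<lambda>j. resolvent A (node P j) (dft P S g j))"

lemma periodic_solution_periodic: "P \<noteq> 0 \<Longrightarrow> periodic_solution P S g (n + P) = periodic_solution P S g n"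
  by (simp add: periodic_solution_def idft_periodic)

lemma Tseq_periodic_solution:
  assumes "P > 0" "finite S"
  shows "Tseq (periodic_solution P S g) n = (\<Sum>m\<in>S. if P dvd (n - m) then g m else 0)"
  using assms by (simp add: periodic_solution_def Tseq_idft resolvent_not_in_spectrum
      node_not_in_spectrum idft_dft)

lemma Tseq_periodic_solution_window:
  assumes "P > 0" "S \<subseteq> {b..<b+P}" "n \<in> {b..<b+P}" and vanish: "\<And>m. m \<notin> S \<Longrightarrow> g m = 0"
  shows "Tseq (periodic_solution P S g) n = g n"
proof -
  have "finite S"
    using assms(2) finite_subset by blast
  have "m = n" if "m \<in> S" "P dvd (n - m)" for m
    using dvd_diff_window_imp_eq[of m b P n] that assms(2,3) by (auto simp: dvd_diff_commute)
  then have "(\<Sum>m\<in>S. if P dvd (n - m) then g m else 0) = (\<Sum>m\<in>S. if m = n then g m else 0)"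
    by (intro sum.cong) auto
  also have "\<dots> = g n"
    using vanish[of n] \<open>finite S\<close> by simp
  finally show ?thesis
    using assms(1) \<open>finite S\<close> by (simp add: Tseq_periodic_solution)
qed

lemma sum_norm_periodic_solution:
  assumes "P > 0" "S \<subseteq> {a..<a+P}"
  shows "(\<Sum>n\<in>{b..<b+P}. (norm (periodic_solution P S g n))\<^sup>2) \<le> M\<^sup>2 * (\<Sum>m\<in>S. (norm (g m))\<^sup>2)"
proof -
  have "(\<Sum>n\<in>{b..<b+P}. (norm (periodic_solution P S g n))\<^sup>2)
      = inverse (of_int P) * (\<Sum>j\<in>{0..<P}. (norm (resolvent A (node P j) (dft P S g j)))\<^sup>2)"
    unfolding periodic_solution_def by (rule sum_norm_idft[OF assms(1)])
  also have "\<dots> \<le> inverse (of_int P) * (M\<^sup>2 * (\<Sum>j\<in>{0..<P}. (norm (dft P S g j))\<^sup>2))"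
    using assms(1) by (intro mult_left_mono sum_norm_resolvent_node_le) simp
  also have "\<dots> = M\<^sup>2 * (\<Sum>m\<in>S. (norm (g m))\<^sup>2)"
    using assms by (simp add: sum_norm_dft)
  finally show ?thesis .
qed

lemma Tseq_cut_period:
  assumes "P > 0" and periodic: "\<And>n. w (n + P) = w n"
    and solves: "\<And>n. n \<in> {n0-P+1..n0} \<Longrightarrow> Tseq w n = g n"
    and vanish: "\<And>n. n \<notin> {n0-P<..<n0} \<Longrightarrow> g n = 0"
  shows "Tseq (\<lambda>n. if n \<in> {n0-P+1..n0} then w n else 0) n - g n
    = (if n = n0 then - A (w n0) else if n = n0 - P then A (w n0) else 0)"
proof -
  have A0: "A 0 = 0"
    using bounded_clinear_scaleR[OF bounded_clinear_A, of 0 0] by simp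
  consider "n = n0" | "n = n0 - P" | "n \<in> {n0-P<..<n0}" | "n < n0 - P \<or> n > n0"
    by fastforce
  then show ?thesis
  proof cases
    case 1
    then show ?thesis using vanish \<open>P > 0\<close> by (simp add: Tseq_def)
  next
    case 2
    have "w (n0 - P + 1) = w (n0 + 1)"
      using periodic[of "n0 - P + 1"] by simp
    moreover have "\<rho> *\<^sub>R w (n0 + 1) = A (w n0)"
      using solves[of n0] vanish[of n0] \<open>P > 0\<close> by (simp add: Tseq_def)
    ultimately show ?thesis
      using 2 vanish[of n] \<open>P > 0\<close> by (simp add: Tseq_def A0)
  next
    case 3
    then show ?thesis
      using solves[of n] by (simp add: Tseq_def)
  next
    case 4
    then show ?thesis
      using vanish[of n] \<open>P > 0\<close> by (auto simp: Tseq_def A0)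
  qed
qed

text \<open>Take the periodic solution of period \<open>P = 2K + Q + 1\<close> and cut it at the point \<open>n0\<close>
  of the gap \<open>{K+1..K+Q}\<close> between two copies of the support of \<open>g\<close> where it is smallest;
  the squared error is then of order \<open>1 / Q\<close>.\<close>
lemma approximate_solution:
  assumes "K \<ge> 0" "Q > 0" and support: "\<And>m. m \<notin> {-K..K} \<Longrightarrow> g m = 0"
  obtains v w n0 n1 where "n1 < n0" "\<And>n. n \<notin> {n1..n0} \<Longrightarrow> v n = 0"
    "\<And>n. Tseq v n - g n = (if n = n0 then - A w else if n = n1 then A w else 0)"
    "of_int Q * (norm w)\<^sup>2 \<le> M\<^sup>2 * (\<Sum>m\<in>{-K..K}. (norm (g m))\<^sup>2)"
proof -
  define P where "P = 2 * K + Q + 1"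
  define w where "w = periodic_solution P {-K..K} g"
  have "P > 0" using assms by (simp add: P_def)
  have "{K+1..K+Q} \<subseteq> {-K..<-K+P}"
    using assms by (auto simp: P_def)
  then have "(\<Sum>n\<in>{K+1..K+Q}. (norm (w n))\<^sup>2) \<le> (\<Sum>n\<in>{-K..<-K+P}. (norm (w n))\<^sup>2)"
    by (intro sum_mono2) auto
  also have "\<dots> \<le> M\<^sup>2 * (\<Sum>m\<in>{-K..K}. (norm (g m))\<^sup>2)"
    unfolding w_def using \<open>P > 0\<close> \<open>Q > 0\<close>
    by (intro sum_norm_periodic_solution[where a="-K"]) (auto simp: P_def)
  finally have energy: "(\<Sum>n\<in>{K+1..K+Q}. (norm (w n))\<^sup>2) \<le> M\<^sup>2 * (\<Sum>m\<in>{-K..K}. (norm (g m))\<^sup>2)" .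
  obtain n0 where n0: "n0 \<in> {K+1..K+Q}"
    "of_nat (card {K+1..K+Q}) * (norm (w n0))\<^sup>2 \<le> (\<Sum>n\<in>{K+1..K+Q}. (norm (w n))\<^sup>2)"
    using ex_card_mult_le_sum[of "{K+1..K+Q}" "\<lambda>n. (norm (w n))\<^sup>2"] \<open>Q > 0\<close> by auto
  have "Tseq w n = g n" if "n \<in> {n0-P+1..n0}" for n
    unfolding w_def using \<open>P > 0\<close> that n0(1) support
    by (intro Tseq_periodic_solution_window[where b="n0-P+1"]) (auto simp: P_def)
  moreover have "g n = 0" if "n \<notin> {n0-P<..<n0}" for n
    using support[of n] that n0(1) by (auto simp: P_def)
  ultimately have "Tseq (\<lambda>n. if n \<in> {n0-P+1..n0} then w n else 0) n - g n
      = (if n = n0 then - A (w n0) else if n = n0 - P then A (w n0) else 0)" for n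
    using \<open>P > 0\<close> by (intro Tseq_cut_period) (auto simp: w_def periodic_solution_periodic)
  moreover have "of_int Q * (norm (w n0))\<^sup>2 \<le> M\<^sup>2 * (\<Sum>m\<in>{-K..K}. (norm (g m))\<^sup>2)"
    using n0(2) energy \<open>Q > 0\<close> by simp
  ultimately show thesis
    using \<open>P > 0\<close>
    by (intro that[of "n0 - P" n0 "\<lambda>n. if n \<in> {n0-P+1..n0} then w n else 0" "w n0"]) auto
qed

definition T :: "'h l2 \<Rightarrow> 'h l2" where
  "T x = \<rho> *\<^sub>R l2_shift x - l2_map A x"

lemma bounded_linear_A: "bounded_linear A"
  by (rule bounded_clinear_bounded_linear[OF bounded_clinear_A])

lemma Rep_l2_T: "Rep_l2 (T x) = Tseq (Rep_l2 x)"
  by (simp add: T_def Tseq_def fun_eq_iff Rep_l2_simps Rep_l2_shift Rep_l2_map[OF bounded_linear_A])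

lemma bounded_linear_T: "bounded_linear T"
  unfolding T_def
  by (intro bounded_linear_sub bounded_linear_compose[OF bounded_linear_scaleR_right]
      bounded_linear_l2_shift bounded_linear_l2_map bounded_linear_A)

lemma norm_le_M_T_finsupp:
  assumes "x \<in> l2_finsupp"
  shows "norm x \<le> M * norm (T x)"
proof -
  obtain N where "N \<ge> 0" and N: "\<And>n. n \<notin> {-N..N} \<Longrightarrow> Rep_l2 x n = 0"
    using assms by (auto simp: l2_finsupp_def)
  define a where "a = - N - 1"
  define P where "P = 2 * N + 3"
  have support: "Rep_l2 x n = 0" if "n \<notin> {a+1..<a+P}" for n
    using N[of n] that by (auto simp: a_def P_def)
  have "(norm x)\<^sup>2 = (\<Sum>n\<in>{a..<a+P}. (norm (Rep_l2 x n))\<^sup>2)"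
    using support by (intro norm_l2_squared_finite_support) auto
  also have "\<dots> \<le> M\<^sup>2 * (\<Sum>n\<in>{a..<a+P}. (norm (Rep_l2 (T x) n))\<^sup>2)"
    unfolding Rep_l2_T using \<open>N \<ge> 0\<close> by (intro sum_norm_le_M_Tseq) (auto simp: P_def support)
  also have "\<dots> \<le> M\<^sup>2 * (norm (T x))\<^sup>2"
    by (intro mult_left_mono sum_le_norm_l2_squared) auto
  finally show ?thesis
    using M_nonneg by (simp add: power2_le_iff_abs_le flip: power_mult_distrib)
qed

lemma norm_le_M_T: "norm x \<le> M * norm (T x)"
proof -
  have "closed {x. norm x \<le> M * norm (T x)}"
    using linear_continuous_on[OF bounded_linear_T]
    by (intro closed_Collect_le continuous_intros) auto
  then have "closure l2_finsupp \<subseteq> {x. norm x \<le> M * norm (T x)}"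
    using norm_le_M_T_finsupp by (intro closure_minimal) auto
  then show ?thesis
    by (auto simp: closure_l2_finsupp)
qed

lemma approximate_preimage_T:
  assumes "K \<ge> 0" "Q > 0" and support: "\<And>n. n \<notin> {-K..K} \<Longrightarrow> Rep_l2 g n = 0"
  obtains y where "of_int Q * (norm (T y - g))\<^sup>2 \<le> 2 * (onorm A * M * norm g)\<^sup>2"
proof -
  obtain v w n0 n1 where v: "n1 < n0" "\<And>n. n \<notin> {n1..n0} \<Longrightarrow> v n = 0"
    and error: "\<And>n. Tseq v n - Rep_l2 g n = (if n = n0 then - A w else if n = n1 then A w else 0)"
    and small: "of_int Q * (norm w)\<^sup>2 \<le> M\<^sup>2 * (\<Sum>m\<in>{-K..K}. (norm (Rep_l2 g m))\<^sup>2)"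
    by (rule approximate_solution[of K Q "Rep_l2 g"]) (use assms in auto)
  have Rep_v: "Rep_l2 (Abs_l2 v) = v"
    using v(2) by (intro Abs_l2_inverse l2_seqs_finite_support[of "{n1..n0}"]) auto
  have Rep_error: "Rep_l2 (T (Abs_l2 v) - g) n = Tseq v n - Rep_l2 g n" for n
    by (simp add: Rep_l2_minus Rep_l2_T Rep_v)
  have "(norm (T (Abs_l2 v) - g))\<^sup>2 = (\<Sum>n\<in>{n0, n1}. (norm (Tseq v n - Rep_l2 g n))\<^sup>2)"
    unfolding Rep_error[symmetric] by (rule norm_l2_squared_finite_support) (auto simp: Rep_error error)
  also have "\<dots> = 2 * (norm (A w))\<^sup>2"
    using v(1) by (simp add: error)
  also have "\<dots> \<le> 2 * (onorm A)\<^sup>2 * (norm w)\<^sup>2"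
    using onorm[OF bounded_linear_A, of w] by (simp add: power_mono flip: power_mult_distrib)
  finally have "of_int Q * (norm (T (Abs_l2 v) - g))\<^sup>2 \<le> 2 * (onorm A)\<^sup>2 * (of_int Q * (norm w)\<^sup>2)"
    using \<open>Q > 0\<close> by (simp add: algebra_simps)
  also have "\<dots> \<le> 2 * (onorm A)\<^sup>2 * (M\<^sup>2 * (norm g)\<^sup>2)"
    using small norm_l2_squared_finite_support[of "{-K..K}" g] support
    by (intro mult_left_mono) auto
  finally show thesis
    by (intro that[of "Abs_l2 v"]) (simp add: power_mult_distrib)
qed

lemma closure_range_T: "closure (range T) = UNIV"
proof -
  have "g \<in> closure (range T)" if g: "g \<in> l2_finsupp" for g
  proof -
    obtain N where "N \<ge> 0" and N: "\<And>n. n \<notin> {-N..N} \<Longrightarrow> Rep_l2 g n = 0"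
      using g by (auto simp: l2_finsupp_def)
    let ?C = "2 * (onorm A * M * norm g)\<^sup>2"
    have "\<exists>y\<in>range T. dist y g < e" if "e > 0" for e
    proof -
      define Q where "Q = \<lceil>?C / e\<^sup>2\<rceil> + 1"
      have "0 \<le> ?C / e\<^sup>2"
        by simp
      then have "?C / e\<^sup>2 < of_int Q" "Q > 0"
        unfolding Q_def using le_of_int_ceiling[of "?C / e\<^sup>2"] by linarith+
      then have "?C < of_int Q * e\<^sup>2"
        using \<open>e > 0\<close> by (simp add: pos_divide_less_eq)
      moreover obtain y where "of_int Q * (norm (T y - g))\<^sup>2 \<le> ?C"
        by (rule approximate_preimage_T[OF \<open>N \<ge> 0\<close> \<open>Q > 0\<close> N])
      ultimately have "of_int Q * (norm (T y - g))\<^sup>2 < of_int Q * e\<^sup>2"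
        by linarith
      then have "(norm (T y - g))\<^sup>2 < e\<^sup>2"
        using \<open>Q > 0\<close> by simp
      then have "norm (T y - g) < e"
        using \<open>e > 0\<close> by (simp add: power_less_imp_less_base)
      then show ?thesis
        by (auto simp: dist_norm)
    qed
    then show ?thesis by (simp add: closure_approachable)
  qed
  then have "closure l2_finsupp \<subseteq> closure (range T)"
    by (intro closure_minimal) auto
  then show ?thesis
    by (auto simp: closure_l2_finsupp)
qed

lemma surj_T: "surj T"
  by (rule surj_if_bounded_below_dense_range[OF bounded_linear_T norm_le_M_T closure_range_T])

end

section \<open>The weighted space \<open>\<ell>\<^sub>2\<^sub>,\<^sub>\<rho>(\<int>; H)\<close>\<close>

definition weight :: "real \<Rightarrow> (int \<Rightarrow> 'a::real_vector) \<Rightarrow> int \<Rightarrow> 'a" where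
  "weight r u n = r powr (- of_int n) *\<^sub>R u n"

lemma weight_weight: "r > 0 \<Longrightarrow> s > 0 \<Longrightarrow> weight r (weight s u) = weight (r * s) u"
  by (simp add: weight_def fun_eq_iff powr_mult)

lemma weight_1 [simp]: "weight 1 u = u"
  by (simp add: weight_def fun_eq_iff)

lemma weight_diff: "weight r (u - v) = (\<lambda>n. weight r u n - weight r v n)"
  by (simp add: weight_def fun_eq_iff scaleR_diff_right)

lemma weight_add: "weight r (\<lambda>n. u n + v n) = (\<lambda>n. weight r u n + weight r v n)"
  by (simp add: weight_def fun_eq_iff scaleR_add_right)

lemma l2rho_iff_weight:
  assumes "r > 0"
  shows "u \<in> l2rho r \<longleftrightarrow> weight r u \<in> l2_seqs"
proof -
  have "(norm (weight r u n))\<^sup>2 = (norm (u n))\<^sup>2 * r powr (- 2 * of_int n)" for n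
    using assms by (simp add: weight_def power_mult_distrib power2_eq_square flip: powr_add)
  then show ?thesis
    by (simp add: l2rho_def l2_seqs_def)
qed

lemma norm_l2rho_weight:
  assumes "r > 0" "u \<in> l2rho r"
  shows "norm_l2rho r u = norm (Abs_l2 (weight r u))"
proof -
  have "(norm (weight r u n))\<^sup>2 = (norm (u n))\<^sup>2 * r powr (- 2 * of_int n)" for n
    using assms by (simp add: weight_def power_mult_distrib power2_eq_square flip: powr_add)
  then show ?thesis
    using assms by (simp add: norm_l2rho_def norm_l2_def Abs_l2_inverse l2rho_iff_weight)
qed

lemma le_cInf_mult:
  fixes a b :: real
  assumes "S \<noteq> {}" "0 \<le> b" and le: "\<And>L. L \<in> S \<Longrightarrow> a \<le> L * b"
  shows "a \<le> Inf S * b"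
proof (cases "b = 0")
  case True
  then show ?thesis
    using assms(1) le by auto
next
  case False
  then have "a / b \<le> Inf S"
    using assms by (intro cInf_greatest) (simp_all add: pos_divide_le_eq)
  then show ?thesis
    using False assms(2) by (simp add: pos_divide_le_eq)
qed

lemma lip_l2rho:
  fixes F :: "(int \<Rightarrow> 'a::real_normed_vector) \<Rightarrow> int \<Rightarrow> 'a"
  assumes "lipschitz_l2rho r F"
  shows lip_l2rho_nonneg: "0 \<le> lip_l2rho r F"
    and lip_l2rho_le: "\<And>u v. u \<in> l2rho r \<Longrightarrow> v \<in> l2rho r \<Longrightarrow>
      norm_l2rho r (F u - F v) \<le> lip_l2rho r F * norm_l2rho r (u - v)"
proof -
  define S where "S = {L. 0 \<le> L \<and> (\<forall>u\<in>l2rho r. \<forall>v\<in>l2rho r.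
    norm_l2rho r (F u - F v) \<le> L * norm_l2rho r (u - v))}"
  have lip: "lip_l2rho r F = Inf S"
    by (simp add: lip_l2rho_def S_def)
  have norm_nonneg: "0 \<le> norm_l2rho r w" for w :: "int \<Rightarrow> 'a"
    by (simp add: norm_l2rho_def infsum_nonneg)
  obtain L where L: "\<forall>u\<in>l2rho r. \<forall>v\<in>l2rho r. norm_l2rho r (F u - F v) \<le> L * norm_l2rho r (u - v)"
    using assms by (auto simp: lipschitz_l2rho_def)
  have "max L 0 \<in> S"
    unfolding S_def using L norm_nonneg
    by (auto intro: order_trans[OF _ mult_right_mono[of L "max L 0"]])
  then have "S \<noteq> {}" by blast
  show "0 \<le> lip_l2rho r F"
    unfolding lip by (rule cInf_greatest[OF \<open>S \<noteq> {}\<close>]) (simp add: S_def)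
  show "norm_l2rho r (F u - F v) \<le> lip_l2rho r F * norm_l2rho r (u - v)"
    if "u \<in> l2rho r" "v \<in> l2rho r" for u v
    unfolding lip using that norm_nonneg
    by (intro le_cInf_mult[OF \<open>S \<noteq> {}\<close>]) (auto simp: S_def)
qed

context resolvent_circle
begin

definition to_l2 :: "(int \<Rightarrow> 'h) \<Rightarrow> 'h l2" where
  "to_l2 u = Abs_l2 (weight \<rho> u)"

definition from_l2 :: "'h l2 \<Rightarrow> int \<Rightarrow> 'h" where
  "from_l2 y = weight (inverse \<rho>) (Rep_l2 y)"

lemma from_l2_in_l2rho: "from_l2 y \<in> l2rho \<rho>"
  using rho_pos Rep_l2[of y] by (simp add: from_l2_def l2rho_iff_weight weight_weight)

lemma to_l2_from_l2: "to_l2 (from_l2 y) = y"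
  using rho_pos by (simp add: to_l2_def from_l2_def weight_weight Rep_l2_inverse)

lemma from_l2_to_l2: "u \<in> l2rho \<rho> \<Longrightarrow> from_l2 (to_l2 u) = u"
  using rho_pos by (simp add: to_l2_def from_l2_def Abs_l2_inverse l2rho_iff_weight weight_weight)

lemma l2rho_add: "u \<in> l2rho \<rho> \<Longrightarrow> v \<in> l2rho \<rho> \<Longrightarrow> (\<lambda>n. u n + v n) \<in> l2rho \<rho>"
  using rho_pos by (simp add: l2rho_iff_weight weight_add l2_seqs_add)

lemma l2rho_diff: "u \<in> l2rho \<rho> \<Longrightarrow> v \<in> l2rho \<rho> \<Longrightarrow> u - v \<in> l2rho \<rho>"
  using rho_pos by (simp add: l2rho_iff_weight weight_diff l2_seqs_diff)

lemma to_l2_diff: "u \<in> l2rho \<rho> \<Longrightarrow> v \<in> l2rho \<rho> \<Longrightarrow> to_l2 (u - v) = to_l2 u - to_l2 v"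
  using rho_pos l2rho_diff[of u v]
  by (intro l2_eqI) (simp add: to_l2_def Abs_l2_inverse l2rho_iff_weight Rep_l2_minus weight_def
      scaleR_diff_right)

lemma to_l2_add: "u \<in> l2rho \<rho> \<Longrightarrow> v \<in> l2rho \<rho> \<Longrightarrow> to_l2 (\<lambda>n. u n + v n) = to_l2 u + to_l2 v"
  using rho_pos l2rho_add[of u v]
  by (intro l2_eqI) (simp add: to_l2_def Abs_l2_inverse l2rho_iff_weight Rep_l2_plus weight_add)

lemma norm_to_l2: "u \<in> l2rho \<rho> \<Longrightarrow> norm (to_l2 u) = norm_l2rho \<rho> u"
  using rho_pos by (simp add: to_l2_def norm_l2rho_weight)

lemma Tseq_weight: "Tseq (weight \<rho> u) n = \<rho> powr (- of_int n) *\<^sub>R (u (n + 1) - A (u n))"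
proof -
  have "\<rho> * \<rho> powr (- of_int (n + 1)) = \<rho> powr (- of_int n)"
    using rho_pos by (simp add: powr_add[symmetric] powr_diff)
  then show ?thesis
    by (simp add: Tseq_def weight_def bounded_clinear_scaleR[OF bounded_clinear_A] scaleR_diff_right)
qed

lemma shift_eq_iff_T:
  assumes "u \<in> l2rho \<rho>" "f \<in> l2rho \<rho>"
  shows "shift u = (\<lambda>n. A (u n) + f n) \<longleftrightarrow> T (to_l2 u) = to_l2 f"
proof -
  have "T (to_l2 u) = to_l2 f \<longleftrightarrow> Tseq (weight \<rho> u) = weight \<rho> f"
    using assms rho_pos
    by (simp add: to_l2_def Rep_l2_inject[symmetric] Rep_l2_T Abs_l2_inverse l2rho_iff_weight)
  also have "\<dots> \<longleftrightarrow> (\<forall>n. u (n + 1) - A (u n) = f n)"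
    using rho_pos by (simp add: fun_eq_iff Tseq_weight weight_def)
  also have "\<dots> \<longleftrightarrow> shift u = (\<lambda>n. A (u n) + f n)"
    by (auto simp: shift_def fun_eq_iff algebra_simps)
  finally show ?thesis ..
qed

lemma lipschitz_to_l2_conj:
  assumes F: "\<forall>u\<in>l2rho \<rho>. F u \<in> l2rho \<rho>"
    and lip: "\<And>u v. u \<in> l2rho \<rho> \<Longrightarrow> v \<in> l2rho \<rho> \<Longrightarrow>
      norm_l2rho \<rho> (F u - F v) \<le> L * norm_l2rho \<rho> (u - v)"
  shows "norm (to_l2 (F (from_l2 y)) - to_l2 (F (from_l2 z))) \<le> L * norm (y - z)"
proof -
  let ?u = "from_l2 y" and ?v = "from_l2 z"
  have u: "?u \<in> l2rho \<rho>" "F ?u \<in> l2rho \<rho>" and v: "?v \<in> l2rho \<rho>" "F ?v \<in> l2rho \<rho>"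
    using F from_l2_in_l2rho by auto
  have "norm (to_l2 (F ?u) - to_l2 (F ?v)) = norm_l2rho \<rho> (F ?u - F ?v)"
    using u v by (simp add: norm_to_l2 l2rho_diff flip: to_l2_diff)
  also have "\<dots> \<le> L * norm_l2rho \<rho> (?u - ?v)"
    using lip u v by blast
  also have "norm_l2rho \<rho> (?u - ?v) = norm (y - z)"
    using norm_to_l2[OF l2rho_diff[OF u(1) v(1)]] to_l2_diff[OF u(1) v(1)]
    by (simp add: to_l2_from_l2)
  finally show ?thesis .
qed

theorem ex1_solution_l2rho:
  assumes F: "\<forall>u\<in>l2rho \<rho>. F u \<in> l2rho \<rho>" and f: "f \<in> l2rho \<rho>"
    and lip: "\<And>u v. u \<in> l2rho \<rho> \<Longrightarrow> v \<in> l2rho \<rho> \<Longrightarrow>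
      norm_l2rho \<rho> (F u - F v) \<le> L * norm_l2rho \<rho> (u - v)"
    and "0 \<le> L" "L * M < 1"
  shows "\<exists>!u. u \<in> l2rho \<rho> \<and> shift u = (\<lambda>n. A (u n) + F u n + f n)"
proof (rule ex1_transfer[OF from_l2_in_l2rho to_l2_from_l2 from_l2_to_l2])
  define G where "G y = to_l2 (\<lambda>n. F (from_l2 y) n + f n)" for y
  have "G y - G z = to_l2 (F (from_l2 y)) - to_l2 (F (from_l2 z))" for y z
    using F f from_l2_in_l2rho by (simp add: G_def to_l2_add)
  then have "norm (G y - G z) \<le> L * norm (y - z)" for y z
    using lipschitz_to_l2_conj[OF F lip] by simp
  then show "\<exists>!y. T y = G y"
    using assms(4,5) M_nonneg norm_le_M_T
    by (intro ex1_solution_bounded_below_contraction bounded_linear.linear[OF bounded_linear_T]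
        surj_T) (auto simp: mult.commute)
  show "shift u = (\<lambda>n. A (u n) + F u n + f n) \<longleftrightarrow> T (to_l2 u) = G (to_l2 u)"
    if "u \<in> l2rho \<rho>" for u
    using shift_eq_iff_T[OF that l2rho_add[of "F u" f]] that F f
    by (simp add: G_def from_l2_to_l2 add.assoc)
qed

end

lemma delta_m1_in_l2rho: "r > 0 \<Longrightarrow> delta_m1 x \<in> l2rho r"
  by (simp add: l2rho_iff_weight)
     (rule l2_seqs_finite_support[of "{-1}"]; simp add: weight_def delta_m1_def)

theorem theorem4p1:
  fixes A :: "'h::complex_hilbert \<Rightarrow> 'h" and \<rho> :: real
    and F :: "(int \<Rightarrow> 'h) \<Rightarrow> (int \<Rightarrow> 'h)"
  assumes "separable_space TYPE('h)"
    and "bounded_clinear A"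
    and "\<rho> > 0"
    and "spectrum A \<inter> sphere 0 \<rho> = {}"
    and "\<forall>u\<in>l2rho \<rho>. F u \<in> l2rho \<rho>"
    and "lipschitz_l2rho \<rho> F"
    and "lip_l2rho \<rho> F * M_rho A \<rho> < 1"
  shows "\<forall>x::'h. \<exists>!u. u \<in> l2rho \<rho> \<and> shift u = (\<lambda>n. A (u n) + F u n + delta_m1 x n)"
proof
  fix x :: 'h
  interpret resolvent_circle A \<rho>
    using assms(2-4) by unfold_locales
  show "\<exists>!u. u \<in> l2rho \<rho> \<and> shift u = (\<lambda>n. A (u n) + F u n + delta_m1 x n)"
    using assms(5,7) delta_m1_in_l2rho[OF assms(3)]
      lip_l2rho_le[OF assms(6)] lip_l2rho_nonneg[OF assms(6)]
    by (intro ex1_solution_l2rho) auto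
qed

end
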